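(* Let $N$ be an $\mathbb{N}^n$-graded submodule of $S^k=Se_1\oplus\cdots\oplus Se_k$ (with $\deg e_i=0$) that is generated in squarefree degrees. Then the initial module $\mathrm{in}(N)$ with respect to the monomial order $\mathbf x^a e_i<\mathbf x^b e_j$ iff ($j<i$) or ($j=i$ and $\mathbf x^a<_{\mathrm{lex}}\mathbf x^b$) is an $\mathbb{N}^n$-graded submodule of $S^k$ of the form $I_1\oplus\cdots\oplus I_k$ (i.e. $I_1e_1\oplus\cdots\oplus I_ke_k$), where each $I_j$ is a monomial ideal of $S$ generated in squarefree degrees.
   Context: $S=\mathbb{k}[x_1,\dots,x_n]$ with fine $\mathbb{N}^n$-grading; $<_{\mathrm{lex}}$ is the usual lexicographic order on monomials of $S$. The initial module $\mathrm{in}(N)$ is the submodule generated by the leading terms (with respect to the given monomial order on $S^k$) of the elements of $N$. A degree is squarefree if all its entries are in $\{0,1\}$. *)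

theory Defs
  imports "HOL-Library.Poly_Mapping"
begin

text \<open>The ring S = k[x_0..x_{n-1}] is the set of
polynomials only involving variables with index < n.\<close>

type_synonym 'k mpoly = "(nat \<Rightarrow>\<^sub>0 nat) \<Rightarrow>\<^sub>0 'k"

text \<open>Elements of S^k are represented as functions from component indices to polynomials,
with components 0..k-1 (standing for e_1..e_k) and zero components beyond.\<close>

type_synonym 'k mvec = "nat \<Rightarrow> 'k mpoly"

definition in_S :: "nat \<Rightarrow> ((nat \<Rightarrow>\<^sub>0 nat) \<Rightarrow>\<^sub>0 'k::zero) \<Rightarrow> bool" where
  "in_S n p \<longleftrightarrow> (\<forall>a \<in> Poly_Mapping.keys p. Poly_Mapping.keys a \<subseteq> {..<n})"

definition in_Fk :: "nat \<Rightarrow> nat \<Rightarrow> 'k::zero mvec \<Rightarrow> bool" where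
  "in_Fk n k v \<longleftrightarrow> (\<forall>j. (j < k \<longrightarrow> in_S n (v j)) \<and> (k \<le> j \<longrightarrow> v j = 0))"

definition is_submodule :: "nat \<Rightarrow> nat \<Rightarrow> 'k::comm_ring_1 mvec set \<Rightarrow> bool" where
  "is_submodule n k N \<longleftrightarrow>
     (\<forall>v\<in>N. in_Fk n k v) \<and> (\<lambda>j. 0) \<in> N \<and>
     (\<forall>v\<in>N. \<forall>w\<in>N. (\<lambda>j. v j + w j) \<in> N) \<and>
     (\<forall>p. \<forall>v\<in>N. in_S n p \<longrightarrow> (\<lambda>j. p * v j) \<in> N)"

definition gen_submodule :: "nat \<Rightarrow> nat \<Rightarrow> 'k::comm_ring_1 mvec set \<Rightarrow> 'k mvec set" where
  "gen_submodule n k G = \<Inter>{N. is_submodule n k N \<and> G \<subseteq> N}"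

definition is_ideal :: "nat \<Rightarrow> 'k::comm_ring_1 mpoly set \<Rightarrow> bool" where
  "is_ideal n I \<longleftrightarrow>
     (\<forall>p\<in>I. in_S n p) \<and> 0 \<in> I \<and> (\<forall>p\<in>I. \<forall>q\<in>I. p + q \<in> I) \<and>
     (\<forall>r. \<forall>p\<in>I. in_S n r \<longrightarrow> r * p \<in> I)"

definition gen_ideal :: "nat \<Rightarrow> 'k::comm_ring_1 mpoly set \<Rightarrow> 'k mpoly set" where
  "gen_ideal n G = \<Inter>{I. is_ideal n I \<and> G \<subseteq> I}"

definition sqfree_deg :: "(nat \<Rightarrow>\<^sub>0 nat) \<Rightarrow> bool" where
  "sqfree_deg d \<longleftrightarrow> (\<forall>i. Poly_Mapping.lookup d i \<le> 1)"

definition hcomp :: "(nat \<Rightarrow>\<^sub>0 nat) \<Rightarrow> 'k::zero mvec \<Rightarrow> 'k mvec" where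
  "hcomp d v = (\<lambda>j. Poly_Mapping.single d (Poly_Mapping.lookup (v j) d))"

definition is_graded :: "'k::zero mvec set \<Rightarrow> bool" where
  "is_graded N \<longleftrightarrow> (\<forall>v\<in>N. \<forall>d. hcomp d v \<in> N)"

definition gen_in_sqfree_degrees :: "nat \<Rightarrow> nat \<Rightarrow> 'k::comm_ring_1 mvec set \<Rightarrow> bool" where
  "gen_in_sqfree_degrees n k N \<longleftrightarrow>
     (\<exists>G. (\<forall>g\<in>G. in_Fk n k g \<and> (\<exists>d. sqfree_deg d \<and> hcomp d g = g)) \<and>
          N = gen_submodule n k G)"

text \<open>Lex order on monomials: x_0 > x_1 > ... ; x^a <lex x^b iff at the first index
where a and b differ, a is smaller.\<close>
definition lex_less :: "(nat \<Rightarrow>\<^sub>0 nat) \<Rightarrow> (nat \<Rightarrow>\<^sub>0 nat) \<Rightarrow> bool" where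
  "lex_less a b \<longleftrightarrow> (\<exists>l. (\<forall>m<l. Poly_Mapping.lookup a m = Poly_Mapping.lookup b m) \<and> Poly_Mapping.lookup a l < Poly_Mapping.lookup b l)"

definition term_less :: "(nat \<Rightarrow>\<^sub>0 nat) \<times> nat \<Rightarrow> (nat \<Rightarrow>\<^sub>0 nat) \<times> nat \<Rightarrow> bool" where
  "term_less s t \<longleftrightarrow> (case s of (a, i) \<Rightarrow> case t of (b, j) \<Rightarrow>
      j < i \<or> (j = i \<and> lex_less a b))"

definition vterms :: "'k::zero mvec \<Rightarrow> ((nat \<Rightarrow>\<^sub>0 nat) \<times> nat) set" where
  "vterms v = {(a, i). a \<in> Poly_Mapping.keys (v i)}"

definition lead_term :: "'k::zero mvec \<Rightarrow> (nat \<Rightarrow>\<^sub>0 nat) \<times> nat" where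
  "lead_term v = (THE t. t \<in> vterms v \<and> (\<forall>s\<in>vterms v. s \<noteq> t \<longrightarrow> term_less s t))"

definition term_vec :: "(nat \<Rightarrow>\<^sub>0 nat) \<times> nat \<Rightarrow> 'k::{zero,one} mvec" where
  "term_vec t = (\<lambda>j. if j = snd t then Poly_Mapping.single (fst t) 1 else 0)"

definition initial_module :: "nat \<Rightarrow> nat \<Rightarrow> 'k::comm_ring_1 mvec set \<Rightarrow> 'k mvec set" where
  "initial_module n k N =
     gen_submodule n k {term_vec (lead_term v) | v. v \<in> N \<and> v \<noteq> (\<lambda>j. 0)}"

definition sqfree_monomial_ideal :: "nat \<Rightarrow> 'k::comm_ring_1 mpoly set \<Rightarrow> bool" where
  "sqfree_monomial_ideal n I \<longleftrightarrow>
     (\<exists>M. (\<forall>m\<in>M. Poly_Mapping.keys m \<subseteq> {..<n} \<and> sqfree_deg m) \<and>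
          I = gen_ideal n ((\<lambda>m. Poly_Mapping.single m 1) ` M))"

end

theory Submission
  imports Defs "HOL-Library.Product_Lexorder"
begin

(*
  Since N is generated in squarefree degrees, the homogeneous component of degree d of any element
  of N has the form x^e w with w in N and d - e squarefree: the elements with this property form a
  submodule, closed under sums because the lcm of two squarefree monomials is squarefree.

  Let v in N have leading term x^a e_j and write its degree-a component as x^e w with s = a - e
  squarefree. The degree-s component of w lies in N, because N is graded, and its i-th entry is the
  coefficient of x^a in v_i times x^s. As the term order compares positions first, its leading term
  is x^s e_j. Hence every leading term x^a e_j is a multiple of a squarefree leading term in the same
  position, and in(N) = I_1 e_1 + ... + I_k e_k with I_j generated by the squarefree monomials x^s
  for which x^s e_j is a leading term.
*)

abbreviation monomial :: "(nat \<Rightarrow>\<^sub>0 nat) \<Rightarrow> 'a::{zero,one} mpoly" where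
  "monomial a \<equiv> Poly_Mapping.single a 1"

section \<open>Polynomials, submodules of \<open>S\<^sup>k\<close> and ideals of \<open>S\<close>\<close>

lemma keys_add_nat: "Poly_Mapping.keys ((a :: nat \<Rightarrow>\<^sub>0 nat) + b) = Poly_Mapping.keys a \<union> Poly_Mapping.keys b"
  by (auto simp: in_keys_iff lookup_add)

lemma poly_mapping_eq_sum_singles:
  "p = (\<Sum>a\<in>Poly_Mapping.keys p. Poly_Mapping.single a (Poly_Mapping.lookup p a))"
  by (rule poly_mapping_eqI) (simp add: lookup_sum lookup_single when_def in_keys_iff)

lemma lookup_single_mult_add:
  "Poly_Mapping.lookup (Poly_Mapping.single b (c :: 'k::comm_semiring_1) * q) (b + d :: nat \<Rightarrow>\<^sub>0 nat) = c * Poly_Mapping.lookup q d"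
  by (simp add: lookup_mult lookup_single when_mult mult_when Sum_any_right_distrib[symmetric])

lemma lookup_single_mult_eq_zero:
  "\<nexists>d'. d = b + d' \<Longrightarrow> Poly_Mapping.lookup (Poly_Mapping.single b (c :: 'k::comm_semiring_1) * q) (d :: nat \<Rightarrow>\<^sub>0 nat) = 0"
  using keys_mult[of "Poly_Mapping.single b c" q] by (auto simp: in_keys_iff split: if_splits)

lemma in_S_zero: "in_S n 0"
  by (simp add: in_S_def)

lemma in_S_single: "Poly_Mapping.keys a \<subseteq> {..<n} \<Longrightarrow> in_S n (Poly_Mapping.single a c)"
  by (simp add: in_S_def)

lemma in_S_add: "in_S n p \<Longrightarrow> in_S n q \<Longrightarrow> in_S n (p + q)"
  using keys_add[of p q] by (auto simp: in_S_def)

lemma in_S_mult: "in_S n p \<Longrightarrow> in_S n q \<Longrightarrow> in_S n (p * q)"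
  using keys_mult[of p q] by (fastforce simp: in_S_def keys_add_nat)

lemma in_Fk_add: "in_Fk n k v \<Longrightarrow> in_Fk n k w \<Longrightarrow> in_Fk n k (\<lambda>j. v j + w j)"
  by (auto simp: in_Fk_def intro: in_S_add)

lemma in_Fk_mult: "in_S n p \<Longrightarrow> in_Fk n k v \<Longrightarrow> in_Fk n k (\<lambda>j. p * v j)"
  by (auto simp: in_Fk_def intro: in_S_mult)

lemma in_Fk_keys: "in_Fk n k v \<Longrightarrow> a \<in> Poly_Mapping.keys (v j) \<Longrightarrow> Poly_Mapping.keys a \<subseteq> {..<n} \<and> j < k"
  unfolding in_Fk_def in_S_def by (metis keys_zero empty_iff not_le)

lemma is_submodule_Fk: "is_submodule n k {v :: 'k::comm_ring_1 mvec. in_Fk n k v}"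
  by (auto simp: is_submodule_def in_Fk_def in_S_zero intro: in_S_add in_S_mult)

lemma is_ideal_S: "is_ideal n {p :: 'k::comm_ring_1 mpoly. in_S n p}"
  by (auto simp: is_ideal_def in_S_zero intro: in_S_add in_S_mult)

lemma
  assumes "is_submodule n k Q"
  shows submodule_zero: "(\<lambda>j. 0) \<in> Q"
    and submodule_add: "v \<in> Q \<Longrightarrow> w \<in> Q \<Longrightarrow> (\<lambda>j. v j + w j) \<in> Q"
    and submodule_mult: "in_S n p \<Longrightarrow> v \<in> Q \<Longrightarrow> (\<lambda>j. p * v j) \<in> Q"
    and submodule_in_Fk: "v \<in> Q \<Longrightarrow> in_Fk n k v"
  using assms by (auto simp: is_submodule_def)

lemma
  assumes "is_ideal n I"
  shows ideal_zero: "0 \<in> I"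
    and ideal_add: "p \<in> I \<Longrightarrow> q \<in> I \<Longrightarrow> p + q \<in> I"
    and ideal_mult: "in_S n r \<Longrightarrow> p \<in> I \<Longrightarrow> r * p \<in> I"
  using assms by (auto simp: is_ideal_def)

lemma sum_vec_closed:
  assumes "(\<lambda>j. 0) \<in> Q" and "\<And>v w. v \<in> Q \<Longrightarrow> w \<in> Q \<Longrightarrow> (\<lambda>j. v j + w j) \<in> Q"
    and "finite A" and "\<And>a. a \<in> A \<Longrightarrow> f a \<in> Q"
  shows "(\<lambda>j. \<Sum>a\<in>A. f a j) \<in> Q"
  using assms(3,4) by (induction A rule: finite_induct) (simp_all add: assms(1,2))

lemma ideal_sum:
  assumes "is_ideal n I" and "finite A" and "\<And>a. a \<in> A \<Longrightarrow> f a \<in> I"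
  shows "(\<Sum>a\<in>A. f a) \<in> I"
  using assms(2,3)
  by (induction A rule: finite_induct) (simp_all add: ideal_zero[OF assms(1)] ideal_add[OF assms(1)])

lemma gen_submodule_least: "is_submodule n k Q \<Longrightarrow> G \<subseteq> Q \<Longrightarrow> gen_submodule n k G \<subseteq> Q"
  unfolding gen_submodule_def by blast

lemma gen_submodule_superset: "G \<subseteq> gen_submodule n k G"
  unfolding gen_submodule_def by blast

lemma is_submodule_gen_submodule:
  assumes "\<forall>g\<in>G. in_Fk n k g"
  shows "is_submodule n k (gen_submodule n k (G :: 'k::comm_ring_1 mvec set))"
proof -
  have "gen_submodule n k G \<subseteq> {v. in_Fk n k v}"
    using assms by (intro gen_submodule_least is_submodule_Fk) blast
  then show ?thesis
    unfolding is_submodule_def[of n k "gen_submodule n k G"]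
    by (auto simp: gen_submodule_def is_submodule_def)
qed

lemma gen_ideal_least: "is_ideal n I \<Longrightarrow> G \<subseteq> I \<Longrightarrow> gen_ideal n G \<subseteq> I"
  unfolding gen_ideal_def by blast

lemma gen_ideal_superset: "G \<subseteq> gen_ideal n G"
  unfolding gen_ideal_def by blast

lemma is_ideal_gen_ideal:
  assumes "\<forall>g\<in>G. in_S n g"
  shows "is_ideal n (gen_ideal n (G :: 'k::comm_ring_1 mpoly set))"
proof -
  have "gen_ideal n G \<subseteq> {p. in_S n p}"
    using assms by (intro gen_ideal_least is_ideal_S) blast
  then show ?thesis
    unfolding is_ideal_def[of n "gen_ideal n G"]
    by (auto simp: gen_ideal_def is_ideal_def)
qed

lemma is_submoduleI_monomial:
  fixes Q :: "'k::comm_ring_1 mvec set"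
  assumes "\<forall>v\<in>Q. in_Fk n k v" and "(\<lambda>j. 0) \<in> Q"
    and "\<And>v w. v \<in> Q \<Longrightarrow> w \<in> Q \<Longrightarrow> (\<lambda>j. v j + w j) \<in> Q"
    and mult: "\<And>b c v. Poly_Mapping.keys b \<subseteq> {..<n} \<Longrightarrow> v \<in> Q \<Longrightarrow> (\<lambda>j. Poly_Mapping.single b c * v j) \<in> Q"
  shows "is_submodule n k Q"
proof -
  have "(\<lambda>j. p * v j) \<in> Q" if p: "in_S n p" and v: "v \<in> Q" for p v
  proof -
    have "(\<lambda>j. \<Sum>a\<in>Poly_Mapping.keys p. Poly_Mapping.single a (Poly_Mapping.lookup p a) * v j) \<in> Q"
      using p v by (intro sum_vec_closed assms(2,3) mult) (auto simp: in_S_def)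
    then show ?thesis
      by (simp add: sum_distrib_right[symmetric] flip: poly_mapping_eq_sum_singles)
  qed
  then show ?thesis
    using assms(1-3) by (auto simp: is_submodule_def)
qed

section \<open>Leading terms\<close>

lemma lex_less_iff_less: "lex_less a b \<longleftrightarrow> a < b"
  by (auto simp: lex_less_def less_poly_mapping.rep_eq less_fun_def)

definition term_key :: "(nat \<Rightarrow>\<^sub>0 nat) \<times> nat \<Rightarrow> int \<times> (nat \<Rightarrow>\<^sub>0 nat)" where
  "term_key t = (- int (snd t), fst t)"

lemma term_less_iff_term_key_less: "term_less s t \<longleftrightarrow> term_key s < term_key t"
  by (cases s; cases t) (auto simp: term_less_def term_key_def lex_less_iff_less)

lemma inj_term_key: "inj term_key"
  by (rule injI) (auto simp: term_key_def prod_eq_iff)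

lemma lead_term_eqI:
  assumes "t \<in> vterms v" and "\<And>s. s \<in> vterms v \<Longrightarrow> s \<noteq> t \<Longrightarrow> term_less s t"
  shows "lead_term v = t"
  unfolding lead_term_def
proof (rule the_equality)
  fix u assume u: "u \<in> vterms v \<and> (\<forall>s\<in>vterms v. s \<noteq> u \<longrightarrow> term_less s u)"
  show "u = t"
    using u assms by (metis order.asym term_less_iff_term_key_less)
qed (use assms in blast)

lemma finite_vterms: "in_Fk n k v \<Longrightarrow> finite (vterms v)"
proof -
  assume v: "in_Fk n k v"
  have "vterms v \<subseteq> (\<Union>j<k. (\<lambda>a. (a, j)) ` Poly_Mapping.keys (v j))"
    using in_Fk_keys[OF v] by (auto simp: vterms_def)
  then show ?thesis
    by (rule finite_subset) auto
qed

lemma vterms_eq_empty_iff: "vterms v = {} \<longleftrightarrow> v = (\<lambda>j. 0)"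
  by (auto simp: vterms_def fun_eq_iff simp flip: keys_eq_empty)

lemma
  assumes "in_Fk n k v" and "v \<noteq> (\<lambda>j. 0)"
  shows lead_term_in_vterms: "lead_term v \<in> vterms v"
    and lead_term_greatest: "s \<in> vterms v \<Longrightarrow> s \<noteq> lead_term v \<Longrightarrow> term_less s (lead_term v)"
proof -
  have fin: "finite (term_key ` vterms v)" and ne: "term_key ` vterms v \<noteq> {}"
    using finite_vterms[OF assms(1)] assms(2) by (simp_all add: vterms_eq_empty_iff)
  obtain t where t: "t \<in> vterms v" "term_key t = Max (term_key ` vterms v)"
    using Max_in[OF fin ne] by auto
  have greatest: "term_less s t" if "s \<in> vterms v" "s \<noteq> t" for s
    using Max_ge[OF fin imageI[OF that(1)]] t(2) inj_term_key[THEN injD, of s t] that(2)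
    by (auto simp: term_less_iff_term_key_less order.order_iff_strict)
  have "lead_term v = t"
    using t(1) greatest by (rule lead_term_eqI)
  then show "lead_term v \<in> vterms v" "s \<in> vterms v \<Longrightarrow> s \<noteq> lead_term v \<Longrightarrow> term_less s (lead_term v)"
    using t(1) greatest by auto
qed

section \<open>Monomial ideals and monomial submodules\<close>

definition monomial_multiples :: "nat \<Rightarrow> (nat \<Rightarrow>\<^sub>0 nat) set \<Rightarrow> (nat \<Rightarrow>\<^sub>0 nat) set" where
  "monomial_multiples n A = {b. Poly_Mapping.keys b \<subseteq> {..<n} \<and> (\<exists>a\<in>A. \<exists>e. b = a + e)}"

lemma monomial_multiples_add:
  assumes "b \<in> monomial_multiples n A" and "Poly_Mapping.keys c \<subseteq> {..<n}"
  shows "c + b \<in> monomial_multiples n A"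
proof -
  obtain a e where "a \<in> A" "b = a + e" "Poly_Mapping.keys b \<subseteq> {..<n}"
    using assms(1) by (auto simp: monomial_multiples_def)
  then have "c + b = a + (e + c)" "Poly_Mapping.keys (c + b) \<subseteq> {..<n}"
    using assms(2) by (simp_all add: ac_simps keys_add_nat)
  then show ?thesis
    using \<open>a \<in> A\<close> by (auto simp: monomial_multiples_def)
qed

lemma monomial_multiples_refl:
  "a \<in> A \<Longrightarrow> Poly_Mapping.keys a \<subseteq> {..<n} \<Longrightarrow> a \<in> monomial_multiples n A"
  unfolding monomial_multiples_def using add_0_right[of a, symmetric] by blast

lemma is_ideal_monomial_multiples:
  "is_ideal n {p :: 'k::comm_ring_1 mpoly. in_S n p \<and> Poly_Mapping.keys p \<subseteq> monomial_multiples n A}"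
  unfolding is_ideal_def
proof (intro conjI ballI allI impI)
  fix p q :: "'k mpoly"
  assume "p \<in> {p. in_S n p \<and> Poly_Mapping.keys p \<subseteq> monomial_multiples n A}"
    and "q \<in> {p. in_S n p \<and> Poly_Mapping.keys p \<subseteq> monomial_multiples n A}"
  then show "p + q \<in> {p. in_S n p \<and> Poly_Mapping.keys p \<subseteq> monomial_multiples n A}"
    using keys_add[of p q] by (auto intro: in_S_add)
next
  fix r p :: "'k mpoly"
  assume p: "p \<in> {p. in_S n p \<and> Poly_Mapping.keys p \<subseteq> monomial_multiples n A}" and r: "in_S n r"
  have "Poly_Mapping.keys (r * p) \<subseteq> monomial_multiples n A"
  proof
    fix x assume "x \<in> Poly_Mapping.keys (r * p)"
    then obtain a b where x: "x = a + b" and a: "a \<in> Poly_Mapping.keys r" and b: "b \<in> Poly_Mapping.keys p"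
      using keys_mult[of r p] by blast
    have "b \<in> monomial_multiples n A"
      using p b by blast
    moreover have "Poly_Mapping.keys a \<subseteq> {..<n}"
      using r a by (simp add: in_S_def)
    ultimately show "x \<in> monomial_multiples n A"
      unfolding x by (rule monomial_multiples_add)
  qed
  then show "r * p \<in> {p. in_S n p \<and> Poly_Mapping.keys p \<subseteq> monomial_multiples n A}"
    using p r by (simp add: in_S_mult)
qed (simp_all add: in_S_zero)

lemma gen_ideal_monomials:
  assumes A: "\<forall>a\<in>A. Poly_Mapping.keys a \<subseteq> {..<n}"
  shows "gen_ideal n (monomial ` A) =
    {p :: 'k::comm_ring_1 mpoly. in_S n p \<and> Poly_Mapping.keys p \<subseteq> monomial_multiples n A}"
proof
  show "gen_ideal n (monomial ` A) \<subseteq> {p. in_S n p \<and> Poly_Mapping.keys p \<subseteq> monomial_multiples n A}"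
  proof (rule gen_ideal_least[OF is_ideal_monomial_multiples], rule image_subsetI)
    fix a assume "a \<in> A"
    then show "monomial a \<in> {p. in_S n p \<and> Poly_Mapping.keys p \<subseteq> monomial_multiples n A}"
      using A by (simp add: in_S_single monomial_multiples_refl)
  qed
next
  have I: "is_ideal n (gen_ideal n (monomial ` A :: 'k mpoly set))"
    using A by (intro is_ideal_gen_ideal) (auto intro: in_S_single)
  show "{p :: 'k mpoly. in_S n p \<and> Poly_Mapping.keys p \<subseteq> monomial_multiples n A} \<subseteq> gen_ideal n (monomial ` A)"
  proof
    fix p :: "'k mpoly"
    assume "p \<in> {p. in_S n p \<and> Poly_Mapping.keys p \<subseteq> monomial_multiples n A}"
    then have p: "Poly_Mapping.keys p \<subseteq> monomial_multiples n A"
      by blast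
    have term_in: "Poly_Mapping.single b (Poly_Mapping.lookup p b) \<in> gen_ideal n (monomial ` A)"
      if b: "b \<in> Poly_Mapping.keys p" for b
    proof -
      from b p have "b \<in> monomial_multiples n A"
        by blast
      then obtain a e where a: "a \<in> A" and b_eq: "b = a + e" and b_keys: "Poly_Mapping.keys b \<subseteq> {..<n}"
        unfolding monomial_multiples_def by blast
      have "Poly_Mapping.keys e \<subseteq> {..<n}"
        using b_keys unfolding b_eq keys_add_nat by blast
      then have "Poly_Mapping.single e (Poly_Mapping.lookup p b) * monomial a \<in> gen_ideal n (monomial ` A)"
        using a by (intro ideal_mult[OF I] in_S_single gen_ideal_superset[THEN subsetD] imageI)
      also have "Poly_Mapping.single e (Poly_Mapping.lookup p b) * monomial a = Poly_Mapping.single b (Poly_Mapping.lookup p b)"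
        by (simp add: mult_single b_eq add.commute)
      finally show ?thesis .
    qed
    have "(\<Sum>b\<in>Poly_Mapping.keys p. Poly_Mapping.single b (Poly_Mapping.lookup p b)) \<in> gen_ideal n (monomial ` A)"
      using term_in by (intro ideal_sum[OF I]) simp_all
    then show "p \<in> gen_ideal n (monomial ` A)"
      by (simp only: poly_mapping_eq_sum_singles[symmetric])
  qed
qed

lemma gen_ideal_monomials_eqI:
  assumes "\<forall>a\<in>A. Poly_Mapping.keys a \<subseteq> {..<n}" and "B \<subseteq> A"
    and "\<And>a. a \<in> A \<Longrightarrow> \<exists>b\<in>B. \<exists>e. a = b + e"
  shows "gen_ideal n (monomial ` A :: 'k::comm_ring_1 mpoly set) = gen_ideal n (monomial ` B)"
proof -
  have "monomial_multiples n A \<subseteq> monomial_multiples n B"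
  proof
    fix x assume "x \<in> monomial_multiples n A"
    then obtain a e where x: "Poly_Mapping.keys x \<subseteq> {..<n}" "a \<in> A" "x = a + e"
      unfolding monomial_multiples_def by blast
    moreover obtain b e' where "b \<in> B" "a = b + e'"
      using assms(3)[OF \<open>a \<in> A\<close>] by blast
    ultimately have "x = b + (e' + e)"
      by (simp add: add.assoc)
    then show "x \<in> monomial_multiples n B"
      unfolding monomial_multiples_def using x(1) \<open>b \<in> B\<close> by blast
  qed
  moreover have "monomial_multiples n B \<subseteq> monomial_multiples n A"
    using assms(2) unfolding monomial_multiples_def by blast
  ultimately have multiples_eq: "monomial_multiples n A = monomial_multiples n B"
    by (rule antisym)
  have "gen_ideal n (monomial ` A) = {p :: 'k mpoly. in_S n p \<and> Poly_Mapping.keys p \<subseteq> monomial_multiples n A}"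
    by (rule gen_ideal_monomials[OF assms(1)])
  also have "\<dots> = gen_ideal n (monomial ` B)"
    unfolding multiples_eq using assms(1,2) by (intro gen_ideal_monomials[symmetric]) blast
  finally show ?thesis .
qed

lemma single_lookup_in_gen_ideal_monomials:
  assumes "\<forall>a\<in>A. Poly_Mapping.keys a \<subseteq> {..<n}" and "p \<in> gen_ideal n (monomial ` A :: 'k::comm_ring_1 mpoly set)"
  shows "Poly_Mapping.single d (Poly_Mapping.lookup p d) \<in> gen_ideal n (monomial ` A)"
proof -
  have "Poly_Mapping.keys (Poly_Mapping.single d (Poly_Mapping.lookup p d)) \<subseteq> Poly_Mapping.keys p"
    by (simp add: in_keys_iff)
  moreover have "in_S n p" "Poly_Mapping.keys p \<subseteq> monomial_multiples n A"
    using assms(2) by (simp_all only: gen_ideal_monomials[OF assms(1)] mem_Collect_eq)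
  ultimately show ?thesis
    unfolding gen_ideal_monomials[OF assms(1)] in_S_def by auto
qed

definition unit_vec :: "nat \<Rightarrow> 'k::zero mpoly \<Rightarrow> 'k mvec" where
  "unit_vec j p = (\<lambda>i. if i = j then p else 0)"

lemma term_vec_eq_unit_vec: "term_vec (a, j) = unit_vec j (monomial a)"
  by (simp add: term_vec_def unit_vec_def fun_eq_iff)

lemma in_Fk_unit_vec: "in_S n p \<Longrightarrow> j < k \<Longrightarrow> in_Fk n k (unit_vec j p)"
  by (simp add: unit_vec_def in_Fk_def in_S_zero)

lemma in_Fk_term_vec: "Poly_Mapping.keys a \<subseteq> {..<n} \<Longrightarrow> j < k \<Longrightarrow> in_Fk n k (term_vec (a, j))"
  by (simp add: term_vec_eq_unit_vec in_Fk_unit_vec in_S_single)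

lemma in_Fk_eq_sum_unit_vec:
  assumes "in_Fk n k v"
  shows "v = (\<lambda>i. \<Sum>j<k. unit_vec j (v j) i)"
  using assms by (auto simp: unit_vec_def in_Fk_def fun_eq_iff)

lemma is_ideal_unit_vec_preimage:
  fixes Q :: "'k::comm_ring_1 mvec set"
  assumes Q: "is_submodule n k Q" and "j < k"
  shows "is_ideal n {p. in_S n p \<and> unit_vec j p \<in> Q}"
proof -
  have "unit_vec j (p + q) = (\<lambda>i. unit_vec j p i + unit_vec j q i)"
    and "unit_vec j (r * p) = (\<lambda>i. r * unit_vec j p i)" for p q r :: "'k mpoly"
    by (simp_all add: unit_vec_def fun_eq_iff)
  moreover have "unit_vec j 0 = (\<lambda>i. 0 :: 'k mpoly)"
    by (simp add: unit_vec_def)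
  ultimately show ?thesis
    using Q by (auto simp: is_ideal_def in_S_zero intro: in_S_add in_S_mult submodule_zero submodule_add submodule_mult)
qed

lemma is_submodule_componentwise:
  assumes "\<And>j. j < k \<Longrightarrow> is_ideal n (J j)"
  shows "is_submodule n k {v. in_Fk n k v \<and> (\<forall>j<k. v j \<in> J j)}"
  using assms
  by (auto simp: is_submodule_def in_Fk_def in_S_zero intro: in_S_add in_S_mult ideal_zero[OF assms] ideal_add[OF assms] ideal_mult[OF assms])

lemma gen_submodule_term_vecs:
  assumes T: "\<And>a j. (a, j) \<in> T \<Longrightarrow> Poly_Mapping.keys a \<subseteq> {..<n} \<and> j < k"
  shows "gen_submodule n k (term_vec ` T) =
    {v :: 'k::comm_ring_1 mvec. in_Fk n k v \<and> (\<forall>j<k. v j \<in> gen_ideal n (monomial ` {a. (a, j) \<in> T}))}"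
    (is "?M = {v. in_Fk n k v \<and> (\<forall>j<k. v j \<in> ?J j)}")
proof
  have J: "is_ideal n (?J j)" for j
    using T by (intro is_ideal_gen_ideal) (auto intro: in_S_single)
  have "term_vec (a, j) \<in> {v. in_Fk n k v \<and> (\<forall>j<k. v j \<in> ?J j)}" if "(a, j) \<in> T" for a j
  proof -
    have "in_Fk n k (term_vec (a, j))"
      using T[OF that] by (intro in_Fk_term_vec) auto
    moreover have "unit_vec j (monomial a) i \<in> ?J i" for i
      using that gen_ideal_superset[of "monomial ` {a. (a, j) \<in> T}" n]
      by (auto simp: unit_vec_def ideal_zero[OF J])
    ultimately show ?thesis
      by (simp add: term_vec_eq_unit_vec)
  qed
  then show "?M \<subseteq> {v. in_Fk n k v \<and> (\<forall>j<k. v j \<in> ?J j)}"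
    by (intro gen_submodule_least is_submodule_componentwise J) auto
next
  have M: "is_submodule n k ?M"
    using T by (intro is_submodule_gen_submodule) (auto intro: in_Fk_term_vec dest: T)
  have J_sub: "?J j \<subseteq> {p. in_S n p \<and> unit_vec j p \<in> ?M}" if "j < k" for j
    using T gen_submodule_superset[of "term_vec ` T" n k]
    by (intro gen_ideal_least is_ideal_unit_vec_preimage[OF M that])
      (auto simp: term_vec_eq_unit_vec intro: in_S_single)
  show "{v. in_Fk n k v \<and> (\<forall>j<k. v j \<in> ?J j)} \<subseteq> ?M"
  proof
    fix v assume v: "v \<in> {v. in_Fk n k v \<and> (\<forall>j<k. v j \<in> ?J j)}"
    then have "(\<lambda>i. \<Sum>j<k. unit_vec j (v j) i) \<in> ?M"
      using J_sub by (intro sum_vec_closed[OF submodule_zero[OF M] submodule_add[OF M]]) auto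
    moreover have "in_Fk n k v"
      using v by blast
    ultimately show "v \<in> ?M"
      by (simp flip: in_Fk_eq_sum_unit_vec)
  qed
qed

lemma is_graded_componentwise_monomial:
  assumes "\<And>j. \<forall>a\<in>A j. Poly_Mapping.keys a \<subseteq> {..<n}"
  shows "is_graded {v :: 'k::comm_ring_1 mvec. in_Fk n k v \<and> (\<forall>j<k. v j \<in> gen_ideal n (monomial ` A j))}"
  using assms
  by (auto simp: is_graded_def hcomp_def in_Fk_def in_S_def in_keys_iff
      intro: single_lookup_in_gen_ideal_monomials[OF assms])

section \<open>Squarefree generation\<close>

lemma hcomp_add: "hcomp d (\<lambda>j. v j + w j) = (\<lambda>j. hcomp d v j + hcomp d w j)"
  by (simp add: hcomp_def lookup_add single_add)

lemma hcomp_mult_single: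
  "hcomp (b + d) (\<lambda>j. Poly_Mapping.single b (c :: 'k::comm_semiring_1) * v j) =
    (\<lambda>j. Poly_Mapping.single b c * hcomp d v j)"
  by (simp add: hcomp_def lookup_single_mult_add mult_single)

lemma hcomp_mult_single_eq_zero:
  "\<nexists>d'. d = b + d' \<Longrightarrow> hcomp d (\<lambda>j. Poly_Mapping.single b (c :: 'k::comm_semiring_1) * v j) = (\<lambda>j. 0)"
  by (simp add: hcomp_def lookup_single_mult_eq_zero)

lemma hcomp_eq_zero_outside:
  assumes "in_Fk n k v" and "\<not> Poly_Mapping.keys d \<subseteq> {..<n}"
  shows "hcomp d v = (\<lambda>j. 0)"
proof -
  have "Poly_Mapping.lookup (v j) d = 0" for j
    using assms in_Fk_keys[of n k v d j] by (auto simp: in_keys_iff)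
  then show ?thesis
    by (simp add: hcomp_def)
qed

lemma sqfree_deg_lcm_split:
  assumes "s1 + e1 = s2 + e2" and "sqfree_deg s1" and "sqfree_deg s2"
  obtains s e f1 f2 where "s1 + e1 = s + e" "sqfree_deg s" "e1 = e + f1" "e2 = e + f2"
proof
  define s where "s = s1 + (s2 - s1)"
  have d: "Poly_Mapping.lookup s1 i + Poly_Mapping.lookup e1 i = Poly_Mapping.lookup s2 i + Poly_Mapping.lookup e2 i" for i
    by (metis assms(1) lookup_add)
  have s: "Poly_Mapping.lookup s i = max (Poly_Mapping.lookup s1 i) (Poly_Mapping.lookup s2 i)" for i
    by (simp add: s_def lookup_add lookup_minus)
  show "sqfree_deg s"
    using assms(2,3) by (simp add: sqfree_deg_def s)
  have "Poly_Mapping.lookup (s1 + e1) i = Poly_Mapping.lookup (s + ((s1 + e1) - s)) i \<and>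
      Poly_Mapping.lookup e1 i = Poly_Mapping.lookup (((s1 + e1) - s) + (s - s1)) i \<and>
      Poly_Mapping.lookup e2 i = Poly_Mapping.lookup (((s1 + e1) - s) + (s - s2)) i" for i
    using d[of i] by (simp add: lookup_add lookup_minus s max_def)
  then show "s1 + e1 = s + ((s1 + e1) - s)" "e1 = ((s1 + e1) - s) + (s - s1)" "e2 = ((s1 + e1) - s) + (s - s2)"
    by (simp_all add: poly_mapping_eq_iff fun_eq_iff)
qed

definition sqfree_multiples :: "nat \<Rightarrow> nat \<Rightarrow> 'k::comm_ring_1 mvec set \<Rightarrow> 'k mvec set" where
  "sqfree_multiples n k N = {v. in_Fk n k v \<and>
     (\<forall>d. \<exists>s e w. d = s + e \<and> sqfree_deg s \<and> w \<in> N \<and> hcomp d v = (\<lambda>j. monomial e * w j))}"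

lemma sqfree_multiplesI:
  assumes "in_Fk n k v" and "(\<lambda>j. 0) \<in> N"
    and "\<And>d. Poly_Mapping.keys d \<subseteq> {..<n} \<Longrightarrow> hcomp d v \<noteq> (\<lambda>j. 0) \<Longrightarrow>
      \<exists>s e w. d = s + e \<and> sqfree_deg s \<and> w \<in> N \<and> hcomp d v = (\<lambda>j. monomial e * w j)"
  shows "v \<in> sqfree_multiples n k N"
proof -
  have "\<exists>s e w. d = s + e \<and> sqfree_deg s \<and> w \<in> N \<and> hcomp d v = (\<lambda>j. monomial e * w j)" for d
  proof (cases "hcomp d v = (\<lambda>j. 0)")
    case True
    then show ?thesis
      using assms(2) by (intro exI[of _ 0] exI[of _ d] exI[of _ "\<lambda>j. 0"]) (simp add: sqfree_deg_def)
  next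
    case False
    then show ?thesis
      using assms(3) hcomp_eq_zero_outside[OF assms(1)] by blast
  qed
  then show ?thesis
    using assms(1) by (simp add: sqfree_multiples_def)
qed

lemma sqfree_multiples_add:
  fixes N :: "'k::comm_ring_1 mvec set"
  assumes N: "is_submodule n k N" and v1: "v1 \<in> sqfree_multiples n k N" and v2: "v2 \<in> sqfree_multiples n k N"
  shows "(\<lambda>j. v1 j + v2 j) \<in> sqfree_multiples n k N"
proof (rule sqfree_multiplesI)
  show "in_Fk n k (\<lambda>j. v1 j + v2 j)"
    using v1 v2 by (simp add: sqfree_multiples_def in_Fk_add)
  show "(\<lambda>j. 0) \<in> N"
    by (rule submodule_zero[OF N])
  fix d :: "nat \<Rightarrow>\<^sub>0 nat" assume d: "Poly_Mapping.keys d \<subseteq> {..<n}"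
  obtain s1 e1 w1 where 1: "d = s1 + e1" "sqfree_deg s1" "w1 \<in> N" "hcomp d v1 = (\<lambda>j. monomial e1 * w1 j)"
    using v1 unfolding sqfree_multiples_def by blast
  obtain s2 e2 w2 where 2: "d = s2 + e2" "sqfree_deg s2" "w2 \<in> N" "hcomp d v2 = (\<lambda>j. monomial e2 * w2 j)"
    using v2 unfolding sqfree_multiples_def by blast
  obtain s e f1 f2 where split: "d = s + e" "sqfree_deg s" "e1 = e + f1" "e2 = e + f2"
    using sqfree_deg_lcm_split[OF trans[OF 1(1)[symmetric] 2(1)] 1(2) 2(2)] 1(1) by metis
  have "Poly_Mapping.keys f1 \<subseteq> Poly_Mapping.keys d"
    by (auto simp: keys_add_nat 1(1) split(3))
  moreover have "Poly_Mapping.keys f2 \<subseteq> Poly_Mapping.keys d"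
    by (auto simp: keys_add_nat 2(1) split(4))
  ultimately have "Poly_Mapping.keys f1 \<subseteq> {..<n}" "Poly_Mapping.keys f2 \<subseteq> {..<n}"
    using d by blast+
  then have "(\<lambda>j. monomial f1 * w1 j + monomial f2 * w2 j) \<in> N"
    using 1(3) 2(3) by (intro submodule_add[OF N] submodule_mult[OF N] in_S_single)
  moreover have "hcomp d (\<lambda>j. v1 j + v2 j) = (\<lambda>j. monomial e * (monomial f1 * w1 j + monomial f2 * w2 j))"
    by (simp add: hcomp_add 1(4) 2(4) split(3,4) distrib_left mult.assoc[symmetric] mult_single)
  ultimately show "\<exists>s e w. d = s + e \<and> sqfree_deg s \<and> w \<in> N \<and> hcomp d (\<lambda>j. v1 j + v2 j) = (\<lambda>j. monomial e * w j)"
    using split(1,2) by blast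
qed

lemma sqfree_multiples_mult_single:
  fixes N :: "'k::comm_ring_1 mvec set"
  assumes N: "is_submodule n k N" and b: "Poly_Mapping.keys b \<subseteq> {..<n}" and v: "v \<in> sqfree_multiples n k N"
  shows "(\<lambda>j. Poly_Mapping.single b c * v j) \<in> sqfree_multiples n k N"
proof (rule sqfree_multiplesI)
  show "in_Fk n k (\<lambda>j. Poly_Mapping.single b c * v j)"
    using v by (simp add: sqfree_multiples_def in_Fk_mult in_S_single[OF b])
  show "(\<lambda>j. 0) \<in> N"
    by (rule submodule_zero[OF N])
  fix d :: "nat \<Rightarrow>\<^sub>0 nat"
  assume "Poly_Mapping.keys d \<subseteq> {..<n}" and "hcomp d (\<lambda>j. Poly_Mapping.single b c * v j) \<noteq> (\<lambda>j. 0)"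
  then obtain d' where d: "d = b + d'"
    using hcomp_mult_single_eq_zero by blast
  obtain s e w where 1: "d' = s + e" "sqfree_deg s" "w \<in> N" "hcomp d' v = (\<lambda>j. monomial e * w j)"
    using v unfolding sqfree_multiples_def by blast
  have "(\<lambda>j. Poly_Mapping.single 0 c * w j) \<in> N"
    using 1(3) by (intro submodule_mult[OF N] in_S_single) simp
  moreover have "hcomp d (\<lambda>j. Poly_Mapping.single b c * v j) = (\<lambda>j. monomial (b + e) * (Poly_Mapping.single 0 c * w j))"
    unfolding d hcomp_mult_single 1(4) by (simp add: mult.assoc[symmetric] mult_single add.commute)
  moreover have "d = s + (b + e)"
    using d 1(1) by (simp add: ac_simps)
  ultimately show "\<exists>s e w. d = s + e \<and> sqfree_deg s \<and> w \<in> N \<and> hcomp d (\<lambda>j. Poly_Mapping.single b c * v j) = (\<lambda>j. monomial e * w j)"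
    using 1(2) by blast
qed

lemma is_submodule_sqfree_multiples:
  assumes "is_submodule n k N"
  shows "is_submodule n k (sqfree_multiples n k N)"
proof (rule is_submoduleI_monomial)
  show "\<forall>v\<in>sqfree_multiples n k N. in_Fk n k v"
    by (simp add: sqfree_multiples_def)
  show "(\<lambda>j. 0) \<in> sqfree_multiples n k N"
    using submodule_zero[OF assms] by (intro sqfree_multiplesI) (auto simp: in_Fk_def in_S_zero hcomp_def)
qed (use sqfree_multiples_add[OF assms] sqfree_multiples_mult_single[OF assms] in blast)+

lemma subset_sqfree_multiples:
  fixes N :: "'k::comm_ring_1 mvec set"
  assumes N: "is_submodule n k N" and "gen_in_sqfree_degrees n k N"
  shows "N \<subseteq> sqfree_multiples n k N"
proof -
  obtain G where G: "\<And>g. g \<in> G \<Longrightarrow> in_Fk n k g \<and> (\<exists>d. sqfree_deg d \<and> hcomp d g = g)"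
    and N_eq: "N = gen_submodule n k G"
    using assms(2) unfolding gen_in_sqfree_degrees_def by blast
  have "g \<in> sqfree_multiples n k N" if g: "g \<in> G" for g
  proof (rule sqfree_multiplesI)
    obtain dg where dg: "sqfree_deg dg" "hcomp dg g = g"
      using G[OF g] by blast
    show "in_Fk n k g" "(\<lambda>j. 0) \<in> N"
      using G[OF g] submodule_zero[OF N] by auto
    fix d :: "nat \<Rightarrow>\<^sub>0 nat"
    assume "Poly_Mapping.keys d \<subseteq> {..<n}" and "hcomp d g \<noteq> (\<lambda>j. 0)"
    then obtain j where "Poly_Mapping.lookup (g j) d \<noteq> 0"
      by (auto simp: hcomp_def fun_eq_iff) (metis single_zero)
    then have "Poly_Mapping.lookup (hcomp dg g j) d \<noteq> 0"
      by (simp add: dg(2))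
    then have "d = dg"
      by (auto simp: hcomp_def lookup_single)
    moreover have "g \<in> N"
      using g N_eq gen_submodule_superset by blast
    ultimately show "\<exists>s e w. d = s + e \<and> sqfree_deg s \<and> w \<in> N \<and> hcomp d g = (\<lambda>j. monomial e * w j)"
      using dg by (intro exI[of _ d] exI[of _ 0] exI[of _ g]) simp
  qed
  then show ?thesis
    unfolding N_eq by (intro gen_submodule_least is_submodule_sqfree_multiples) (auto simp: N_eq[symmetric] N)
qed

section \<open>Squarefree divisors of leading terms\<close>

definition lead_terms :: "'k::zero mvec set \<Rightarrow> ((nat \<Rightarrow>\<^sub>0 nat) \<times> nat) set" where
  "lead_terms N = lead_term ` {v \<in> N. v \<noteq> (\<lambda>j. 0)}"

lemma initial_module_eq_lead_terms: "initial_module n k N = gen_submodule n k (term_vec ` lead_terms N)"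
  by (simp add: initial_module_def lead_terms_def setcompr_eq_image image_image)

lemma lead_terms_bounded:
  assumes "is_submodule n k N" and "(a, j) \<in> lead_terms N"
  shows "Poly_Mapping.keys a \<subseteq> {..<n} \<and> j < k"
proof -
  obtain v where v: "v \<in> N" "v \<noteq> (\<lambda>j. 0)" "lead_term v = (a, j)"
    using assms(2) by (auto simp: lead_terms_def)
  then have "a \<in> Poly_Mapping.keys (v j)"
    using lead_term_in_vterms[OF submodule_in_Fk[OF assms(1)]] by (force simp: vterms_def)
  then show ?thesis
    using in_Fk_keys submodule_in_Fk[OF assms(1) v(1)] by blast
qed

lemma lead_terms_sqfree_divisor:
  fixes N :: "'k::comm_ring_1 mvec set"
  assumes N: "is_submodule n k N" and graded: "is_graded N" and sqfree: "N \<subseteq> sqfree_multiples n k N"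
    and aj: "(a, j) \<in> lead_terms N"
  obtains s e where "a = s + e" "sqfree_deg s" "(s, j) \<in> lead_terms N"
proof -
  obtain v where v: "v \<in> N" "v \<noteq> (\<lambda>j. 0)" and lt: "lead_term v = (a, j)"
    using aj by (auto simp: lead_terms_def)
  have v_Fk: "in_Fk n k v"
    using submodule_in_Fk[OF N v(1)] .
  obtain s e w where se: "a = s + e" "sqfree_deg s" and w: "w \<in> N"
    and hcomp_a: "hcomp a v = (\<lambda>i. monomial e * w i)"
    using sqfree v(1) unfolding sqfree_multiples_def by blast
  define w' where "w' = hcomp s w"
  have "Poly_Mapping.lookup (v i) a = Poly_Mapping.lookup (w i) s" for i
    using arg_cong[OF hcomp_a, of "\<lambda>u. Poly_Mapping.lookup (u i) a"]
    by (simp add: hcomp_def se add.commute lookup_single_mult_add)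
  then have vterms_w': "(b, i) \<in> vterms w' \<longleftrightarrow> b = s \<and> (a, i) \<in> vterms v" for b i
    by (auto simp: w'_def hcomp_def vterms_def in_keys_iff)
  \<comment> \<open>All terms of \<open>w'\<close> share the monomial \<open>x\<^sup>s\<close>, so its leading term is decided by position alone,
    exactly as among the terms \<open>x\<^sup>a e\<^sub>i\<close> of \<open>v\<close>.\<close>
  have "lead_term w' = (s, j)"
  proof (rule lead_term_eqI)
    show "(s, j) \<in> vterms w'"
      using lead_term_in_vterms[OF v_Fk v(2)] lt vterms_w' by simp
    fix t assume "t \<in> vterms w'" "t \<noteq> (s, j)"
    then obtain i where "t = (s, i)" "(a, i) \<in> vterms v" "i \<noteq> j"
      using vterms_w' by (cases t) auto
    then show "term_less t (s, j)"
      using lead_term_greatest[OF v_Fk v(2), of "(a, i)"] lt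
      by (auto simp: term_less_def lex_less_iff_less)
  qed
  moreover have "w' \<in> N"
    using graded w by (simp add: is_graded_def w'_def)
  moreover have "w' \<noteq> (\<lambda>j. 0)"
    using calculation(1) lead_term_in_vterms[OF v_Fk v(2)] lt vterms_w'
    by (auto simp flip: vterms_eq_empty_iff)
  ultimately have "(s, j) \<in> lead_terms N"
    unfolding lead_terms_def by force
  with se show ?thesis
    using that by blast
qed

theorem proposition4p10:
  fixes n k :: nat and N :: "'k::field mvec set"
  assumes "is_submodule n k N"
    and "is_graded N"
    and "gen_in_sqfree_degrees n k N"
  shows "is_submodule n k (initial_module n k N) \<and> is_graded (initial_module n k N) \<and>
         (\<exists>I :: nat \<Rightarrow> 'k mpoly set.
            (\<forall>j<k. sqfree_monomial_ideal n (I j)) \<and>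
            initial_module n k N = {v. in_Fk n k v \<and> (\<forall>j<k. v j \<in> I j)})"
proof -
  define M where "M j = {s. sqfree_deg s \<and> (s, j) \<in> lead_terms N}" for j
  define I where "I j = gen_ideal n (monomial ` M j :: 'k mpoly set)" for j
  note bounded = lead_terms_bounded[OF assms(1)]
  note sqfree_divisor = lead_terms_sqfree_divisor[OF assms(1,2) subset_sqfree_multiples[OF assms(1,3)]]
  have M_bounded: "\<forall>s\<in>M j. Poly_Mapping.keys s \<subseteq> {..<n}" for j
    using bounded by (auto simp: M_def)
  have "gen_ideal n (monomial ` {a. (a, j) \<in> lead_terms N}) = I j" for j
    unfolding I_def using bounded sqfree_divisor by (intro gen_ideal_monomials_eqI) (auto simp: M_def, blast)
  then have initial: "initial_module n k N = {v. in_Fk n k v \<and> (\<forall>j<k. v j \<in> I j)}"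
    using bounded by (simp add: initial_module_eq_lead_terms gen_submodule_term_vecs)
  have "is_submodule n k (initial_module n k N)"
    unfolding initial I_def using M_bounded
    by (intro is_submodule_componentwise is_ideal_gen_ideal) (auto intro: in_S_single)
  moreover have "is_graded (initial_module n k N)"
    unfolding initial I_def using M_bounded by (rule is_graded_componentwise_monomial)
  moreover have "sqfree_monomial_ideal n (I j)" for j
    unfolding sqfree_monomial_ideal_def I_def using M_bounded[of j]
    by (intro exI[of _ "M j"]) (simp add: M_def)
  ultimately show ?thesis
    using initial by blast
qed

end
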